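(* Under the hypotheses of the preceding limit theorem (iid $X_i$ with continuous $F\in\mathcal{D}(G)$, norming constants $a_n,b_n$, $j(n)/n\to\lambda_1>0$, $k(n)/n\to\lambda_2>\lambda_1$, $\beta_i=\lambda_i/(\lambda_2-\lambda_1)$), for all real $u<y$ with $G(u)<1$, \[ \lim_{n\to\infty}\Pr\left(\frac{X_k-b_n}{a_n}\le y\ \Big|\ \frac{X_j-b_n}{a_n}>u,\ X_j\text{ and }X_k\text{ are records}\right) =\frac{G(y)^{\lambda_2}-G(u)^{\lambda_1}\left(\beta_2G(y)^{\lambda_2-\lambda_1}-\beta_1G(u)^{\lambda_2-\lambda_1}\right)}{\beta_2\left(1-G(u)^{\lambda_1}\right)-\beta_1\left(1-G(u)^{\lambda_2}\right)}. \]
   Context: $X_m$ is a record if $X_m>\max(X_1,\dots,X_{m-1})$; $X_1$ is always a record. $F\in\mathcal{D}(G)$ means $F^n(a_nx+b_n)\to G(x)$ for all $x$, with $G$ a non-degenerate extreme value distribution function. *)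

theory Defs
  imports "HOL-Probability.Probability"
begin

definition gev_std :: "real \<Rightarrow> real \<Rightarrow> real" where
  "gev_std \<gamma> x =
     (if \<gamma> = 0 then exp (- exp (- x))
      else if 1 + \<gamma> * x > 0 then exp (- ((1 + \<gamma> * x) powr (- 1 / \<gamma>)))
      else if \<gamma> > 0 then 0 else 1)"

definition is_ev_df :: "(real \<Rightarrow> real) \<Rightarrow> bool" where
  "is_ev_df G \<longleftrightarrow> (\<exists>\<gamma> \<mu> \<sigma>. \<sigma> > 0 \<and> (\<forall>x. G x = gev_std \<gamma> ((x - \<mu>) / \<sigma>)))"

definition in_doa :: "(real \<Rightarrow> real) \<Rightarrow> (real \<Rightarrow> real) \<Rightarrow> (nat \<Rightarrow> real) \<Rightarrow> (nat \<Rightarrow> real) \<Rightarrow> bool" where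
  "in_doa F G a b \<longleftrightarrow> is_ev_df G \<and> (\<forall>n. a n > 0) \<and>
     (\<forall>x. (\<lambda>n. F (a n * x + b n) ^ n) \<longlonglongrightarrow> G x)"

text \<open>X_m (indices start at 1) is a record: X_m > max(X_1,...,X_{m-1}); X_1 always is.\<close>
definition is_record :: "(nat \<Rightarrow> 'a \<Rightarrow> real) \<Rightarrow> nat \<Rightarrow> 'a \<Rightarrow> bool" where
  "is_record X m \<omega> \<longleftrightarrow> (\<forall>i\<in>{1..<m}. X i \<omega> < X m \<omega>)"

end

theory Submission
  imports Defs
begin

text \<open>Since F is continuous, the variables F(X_i) are iid uniform on [0,1]. Conditioning
  on X_k and then on X_j shows that, with p = F(c) and r = F(d), the probability that X_j and
  X_k are records with c < X_j and X_k \<le> d is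
  ((r^k - p^k)/k - p^j (r^{k-j} - p^{k-j})/(k-j))/j, while dropping the constraint on X_k
  amounts to r = 1. For c = a_n u + b_n and d = a_n y + b_n we have p^n \<rightarrow> G(u) and
  r^n \<rightarrow> G(y), so with j \<sim> \<lambda>_1 n and k \<sim> \<lambda>_2 n both probabilities, multiplied by n^2,
  converge; the limit of their ratio is the stated quotient. The limit of the denominator is
  positive because \<lambda> \<mapsto> (1 - G(u)^\<lambda>)/\<lambda> is strictly decreasing, by the strict concavity
  of 1 - exp(-x).\<close>

section \<open>Asymptotics of the two-record probability\<close>

lemma LIMSEQ_power_ratio:
  fixes x :: "nat \<Rightarrow> real" and m :: "nat \<Rightarrow> nat"
  assumes x_nonneg: "\<And>n. 0 \<le> x n" and x_pow: "(\<lambda>n. x n ^ n) \<longlonglongrightarrow> g"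
    and m_ratio: "(\<lambda>n. real (m n) / real n) \<longlonglongrightarrow> l" and "l > 0"
  shows "(\<lambda>n. x n ^ m n) \<longlonglongrightarrow> g powr l"
proof -
  have "eventually (\<lambda>n. real (m n) / real n > 0) sequentially"
    using m_ratio \<open>l > 0\<close> by (simp add: order_tendsto_iff)
  then have "eventually (\<lambda>n. (x n ^ n) powr (real (m n) / real n) = x n ^ m n) sequentially"
  proof eventually_elim
    case (elim n)
    then have "n > 0" "m n > 0" by (auto simp: zero_less_divide_iff)
    show ?case
    proof (cases "x n = 0")
      case False
      then have "x n > 0" using x_nonneg[of n] by simp
      then show ?thesis
        using \<open>n > 0\<close> by (simp add: powr_realpow[symmetric] powr_powr)
    qed (use \<open>n > 0\<close> \<open>m n > 0\<close> in \<open>simp add: power_0_left\<close>)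
  qed
  moreover have "(\<lambda>n. (x n ^ n) powr (real (m n) / real n)) \<longlonglongrightarrow> g powr l"
    using x_nonneg \<open>l > 0\<close> by (intro tendsto_powr'[OF x_pow m_ratio]) auto
  ultimately show ?thesis by (rule Lim_transform_eventually[rotated])
qed

lemma eventually_index_order:
  assumes j_ratio: "(\<lambda>n. real (j n) / real n) \<longlonglongrightarrow> l1" and "0 < l1"
    and k_ratio: "(\<lambda>n. real (k n) / real n) \<longlonglongrightarrow> l2" and "l1 < l2"
  shows "eventually (\<lambda>n. 1 \<le> j n \<and> j n < k n) sequentially"
proof -
  define m where "m = (l1 + l2) / 2"
  have "eventually (\<lambda>n. 0 < real (j n) / real n \<and> real (j n) / real n < m \<and> m < real (k n) / real n) sequentially"
    using \<open>0 < l1\<close> \<open>l1 < l2\<close> unfolding m_def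
    by (intro eventually_conj order_tendstoD[OF j_ratio] order_tendstoD[OF k_ratio]) auto
  then show ?thesis
  proof eventually_elim
    case (elim n)
    then have "n > 0" "real (j n) / real n < real (k n) / real n"
      by (auto simp: zero_less_divide_iff)
    then show ?case using elim by (auto simp: zero_less_divide_iff divide_less_cancel)
  qed
qed

text \<open>two_record_mass (F c) r j k is the probability that X j and X k are records with c < X j
  and F (X k) \<le> r (see prob_two_records).\<close>

definition two_record_mass :: "real \<Rightarrow> real \<Rightarrow> nat \<Rightarrow> nat \<Rightarrow> real" where
  "two_record_mass p r j k =
     ((r ^ k - p ^ k) / real k - p ^ j * (r ^ (k - j) - p ^ (k - j)) / real (k - j)) / real j"

definition two_record_limit :: "real \<Rightarrow> real \<Rightarrow> real \<Rightarrow> real \<Rightarrow> real" where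
  "two_record_limit l1 l2 P Q =
     (let \<beta>\<^sub>1 = l1 / (l2 - l1); \<beta>\<^sub>2 = l2 / (l2 - l1) in
      Q powr l2 - P powr l1 * (\<beta>\<^sub>2 * Q powr (l2 - l1) - \<beta>\<^sub>1 * P powr (l2 - l1)))"

lemma two_record_limit_eq:
  assumes "0 < l1" "l1 < l2"
  shows "two_record_limit l1 l2 P Q / (l1 * l2)
    = (Q powr l2 - P powr l2) / (l1 * l2) - P powr l1 * (Q powr (l2 - l1) - P powr (l2 - l1)) / (l1 * (l2 - l1))"
proof -
  have "P powr l2 = P powr l1 * P powr (l2 - l1)" by (simp add: powr_add[symmetric])
  moreover have "(C - A * (l2 / (l2 - l1) * D - l1 / (l2 - l1) * B)) / (l1 * l2)
      = (C - A * B) / (l1 * l2) - A * (D - B) / (l1 * (l2 - l1))" for A B C D :: real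
  proof -
    have "l1 \<noteq> 0" "l2 \<noteq> 0" "l2 - l1 \<noteq> 0" using assms by auto
    then show ?thesis by (simp add: divide_simps) (simp add: algebra_simps)
  qed
  ultimately show ?thesis by (simp add: two_record_limit_def Let_def)
qed

lemma two_record_limit_one:
  assumes "l1 < l2"
  shows "two_record_limit l1 l2 P 1
    = (let \<beta>\<^sub>1 = l1 / (l2 - l1); \<beta>\<^sub>2 = l2 / (l2 - l1) in \<beta>\<^sub>2 * (1 - P powr l1) - \<beta>\<^sub>1 * (1 - P powr l2))"
proof -
  have "P powr l2 = P powr l1 * P powr (l2 - l1)" by (simp add: powr_add[symmetric])
  moreover have "l2 - l1 \<noteq> 0" using assms by simp
  ultimately show ?thesis by (simp add: two_record_limit_def Let_def divide_simps) (simp add: algebra_simps)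
qed

lemma two_record_mass_asymptotics:
  fixes p q :: "nat \<Rightarrow> real" and j k :: "nat \<Rightarrow> nat"
  assumes p_nonneg: "\<And>n. 0 \<le> p n" and q_nonneg: "\<And>n. 0 \<le> q n"
    and p_pow: "(\<lambda>n. p n ^ n) \<longlonglongrightarrow> P" and q_pow: "(\<lambda>n. q n ^ n) \<longlonglongrightarrow> Q"
    and j_ratio: "(\<lambda>n. real (j n) / real n) \<longlonglongrightarrow> l1" and "0 < l1"
    and k_ratio: "(\<lambda>n. real (k n) / real n) \<longlonglongrightarrow> l2" and "l1 < l2"
  shows "(\<lambda>n. real n ^ 2 * two_record_mass (p n) (q n) (j n) (k n))
    \<longlonglongrightarrow> two_record_limit l1 l2 P Q / (l1 * l2)"
proof -
  have index_order: "eventually (\<lambda>n. 1 \<le> j n \<and> j n < k n) sequentially"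
    using eventually_index_order[OF j_ratio \<open>0 < l1\<close> k_ratio \<open>l1 < l2\<close>] .
  have "(\<lambda>n. real (k n) / real n - real (j n) / real n) \<longlonglongrightarrow> l2 - l1"
    using k_ratio j_ratio by (rule tendsto_diff)
  moreover have "eventually (\<lambda>n. real (k n) / real n - real (j n) / real n = real (k n - j n) / real n) sequentially"
    using index_order by eventually_elim (simp add: of_nat_diff diff_divide_distrib)
  ultimately have gap_ratio: "(\<lambda>n. real (k n - j n) / real n) \<longlonglongrightarrow> l2 - l1"
    by (rule Lim_transform_eventually)
  have inverse_ratio: "(\<lambda>n. real n / real (m n)) \<longlonglongrightarrow> 1 / l"
    if "(\<lambda>n. real (m n) / real n) \<longlonglongrightarrow> l" "l \<noteq> 0" for m :: "nat \<Rightarrow> nat" and l :: real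
    using tendsto_inverse[OF that] by (simp add: inverse_eq_divide)
  have "(\<lambda>n. real n / real (j n) * (real n / real (k n)) * (q n ^ k n - p n ^ k n)
        - real n / real (j n) * (real n / real (k n - j n)) * (p n ^ j n * (q n ^ (k n - j n) - p n ^ (k n - j n))))
      \<longlonglongrightarrow> 1 / l1 * (1 / l2) * (Q powr l2 - P powr l2)
        - 1 / l1 * (1 / (l2 - l1)) * (P powr l1 * (Q powr (l2 - l1) - P powr (l2 - l1)))"
    using \<open>0 < l1\<close> \<open>l1 < l2\<close>
    by (intro tendsto_intros inverse_ratio LIMSEQ_power_ratio[OF q_nonneg q_pow]
        LIMSEQ_power_ratio[OF p_nonneg p_pow] j_ratio k_ratio gap_ratio) auto
  moreover have "eventually (\<lambda>n. real n / real (j n) * (real n / real (k n)) * (q n ^ k n - p n ^ k n)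
        - real n / real (j n) * (real n / real (k n - j n)) * (p n ^ j n * (q n ^ (k n - j n) - p n ^ (k n - j n)))
      = real n ^ 2 * two_record_mass (p n) (q n) (j n) (k n)) sequentially"
    using index_order by eventually_elim (simp add: two_record_mass_def field_simps power2_eq_square)
  ultimately have "(\<lambda>n. real n ^ 2 * two_record_mass (p n) (q n) (j n) (k n))
      \<longlonglongrightarrow> 1 / l1 * (1 / l2) * (Q powr l2 - P powr l2)
        - 1 / l1 * (1 / (l2 - l1)) * (P powr l1 * (Q powr (l2 - l1) - P powr (l2 - l1)))"
    by (rule Lim_transform_eventually)
  then show ?thesis by (simp add: two_record_limit_eq[OF \<open>0 < l1\<close> \<open>l1 < l2\<close>])
qed

lemma mult_one_minus_exp_less:
  fixes \<theta> s :: real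
  assumes "0 < \<theta>" "\<theta> < 1" "0 < s"
  shows "\<theta> * (1 - exp (- s)) < 1 - exp (- \<theta> * s)"
proof -
  define \<psi> where "\<psi> x = 1 - exp (- \<theta> * x) - \<theta> * (1 - exp (- x))" for x
  have derivative: "DERIV \<psi> x :> \<theta> * exp (- \<theta> * x) - \<theta> * exp (- x)" for x
    unfolding \<psi>_def by (auto intro!: derivative_eq_intros)
  obtain z where z: "0 < z" "z < s" "\<psi> s - \<psi> 0 = (s - 0) * (\<theta> * exp (- \<theta> * z) - \<theta> * exp (- z))"
    using MVT2[OF \<open>0 < s\<close> derivative] by blast
  have "exp (- z) < exp (- \<theta> * z)" using z assms by simp
  then have "0 < \<psi> s - \<psi> 0" using z assms by simp
  then show ?thesis by (simp add: \<psi>_def)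
qed

lemma two_record_limit_one_pos:
  assumes "0 \<le> P" "P < 1" "0 < l1" "l1 < l2"
  shows "0 < two_record_limit l1 l2 P 1"
proof -
  have key: "l1 * (1 - P powr l2) < l2 * (1 - P powr l1)"
  proof (cases "P = 0")
    case False
    then have "0 < - l2 * ln P" using assms by (simp add: mult_pos_neg ln_less_zero)
    then have "l1 / l2 * (1 - exp (- (- l2 * ln P))) < 1 - exp (- (l1 / l2) * (- l2 * ln P))"
      using assms by (intro mult_one_minus_exp_less) auto
    then have "l1 / l2 * (1 - P powr l2) < 1 - P powr l1"
      using False assms by (simp add: powr_def)
    then show ?thesis using assms by (simp add: field_simps)
  qed (use assms in simp)
  then have "0 < (l2 * (1 - P powr l1) - l1 * (1 - P powr l2)) / (l2 - l1)"
    using assms by simp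
  also have "\<dots> = two_record_limit l1 l2 P 1"
    using assms by (simp add: two_record_limit_one Let_def diff_divide_distrib)
  finally show ?thesis .
qed

lemma two_record_limit_quotient:
  assumes "l1 < l2"
  shows "two_record_limit l1 l2 P Q / two_record_limit l1 l2 P 1
    = (let \<beta>\<^sub>1 = l1 / (l2 - l1); \<beta>\<^sub>2 = l2 / (l2 - l1) in
       (Q powr l2 - P powr l1 * (\<beta>\<^sub>2 * Q powr (l2 - l1) - \<beta>\<^sub>1 * P powr (l2 - l1)))
       / (\<beta>\<^sub>2 * (1 - P powr l1) - \<beta>\<^sub>1 * (1 - P powr l2)))"
  unfolding two_record_limit_one[OF assms] unfolding two_record_limit_def Let_def ..

lemma two_record_mass_ratio_asymptotics:
  fixes p q :: "nat \<Rightarrow> real" and j k :: "nat \<Rightarrow> nat"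
  assumes p_nonneg: "\<And>n. 0 \<le> p n" and q_nonneg: "\<And>n. 0 \<le> q n"
    and p_pow: "(\<lambda>n. p n ^ n) \<longlonglongrightarrow> P" and q_pow: "(\<lambda>n. q n ^ n) \<longlonglongrightarrow> Q" and "P < 1"
    and j_ratio: "(\<lambda>n. real (j n) / real n) \<longlonglongrightarrow> l1" and "0 < l1"
    and k_ratio: "(\<lambda>n. real (k n) / real n) \<longlonglongrightarrow> l2" and "l1 < l2"
  shows "(\<lambda>n. two_record_mass (p n) (q n) (j n) (k n) / two_record_mass (p n) 1 (j n) (k n))
    \<longlonglongrightarrow> two_record_limit l1 l2 P Q / two_record_limit l1 l2 P 1"
proof -
  note asymptotics = two_record_mass_asymptotics[OF p_nonneg _ p_pow _ j_ratio \<open>0 < l1\<close> k_ratio \<open>l1 < l2\<close>]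
  have "0 \<le> P" using p_pow by (rule LIMSEQ_le_const) (simp add: p_nonneg)
  then have "0 < two_record_limit l1 l2 P 1"
    using assms by (intro two_record_limit_one_pos)
  then have "(\<lambda>n. (real n ^ 2 * two_record_mass (p n) (q n) (j n) (k n)) / (real n ^ 2 * two_record_mass (p n) 1 (j n) (k n)))
    \<longlonglongrightarrow> (two_record_limit l1 l2 P Q / (l1 * l2)) / (two_record_limit l1 l2 P 1 / (l1 * l2))"
    using asymptotics[OF q_nonneg q_pow] asymptotics[where q="\<lambda>_. 1"] assms
    by (intro tendsto_divide) auto
  moreover have "eventually (\<lambda>n. (real n ^ 2 * two_record_mass (p n) (q n) (j n) (k n)) / (real n ^ 2 * two_record_mass (p n) 1 (j n) (k n))
    = two_record_mass (p n) (q n) (j n) (k n) / two_record_mass (p n) 1 (j n) (k n)) sequentially"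
    using eventually_gt_at_top[of 0] by eventually_elim simp
  ultimately show ?thesis
    using assms by (simp add: Lim_transform_eventually)
qed

section \<open>Continuous distribution functions\<close>

lemma continuous_mono_sublevel_eq_atMost:
  fixes F :: "real \<Rightarrow> real" and t :: real
  assumes "continuous_on UNIV F" "mono F" "(F \<longlongrightarrow> 1) at_top" "t < 1" "F x\<^sub>0 \<le> t"
  obtains s where "F s = t" "{x. F x \<le> t} = {..s}"
proof -
  define S where "S = {x. F x \<le> t}"
  obtain B where B: "\<And>x. x \<ge> B \<Longrightarrow> t < F x"
    using order_tendstoD(1)[OF assms(3,4)] by (auto simp: eventually_at_top_linorder)
  have "bdd_above S" unfolding S_def bdd_above_def by (metis B linorder_not_le mem_Collect_eq nle_le)
  moreover have "S \<noteq> {}" "closed S"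
    using assms unfolding S_def by (auto intro!: closed_Collect_le continuous_intros)
  ultimately have s_in: "Sup S \<in> S" and s_max: "\<And>x. x \<in> S \<Longrightarrow> x \<le> Sup S"
    by (auto intro: closed_contains_Sup cSup_upper)
  have "Sup S < B" using s_in B[of "Sup S"] by (force simp: S_def)
  then obtain s where s: "Sup S \<le> s" "s \<le> B" "F s = t"
    using IVT'[of F "Sup S" t B] s_in B[of B] continuous_on_subset[OF assms(1)] by (auto simp: S_def)
  then have "s = Sup S" using s_max[of s] by (simp add: S_def)
  moreover have "S = {..Sup S}"
    using s_max s_in \<open>mono F\<close> by (auto simp: S_def dest: monoD)
  ultimately show ?thesis using that s S_def by blast
qed

lemma (in prob_space) cdf_distr_eq:
  fixes V :: "'a \<Rightarrow> real"
  assumes "V \<in> borel_measurable M" and "\<And>x. prob {\<omega>\<in>space M. V \<omega> \<le> x} = F x"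
  shows "cdf (distr M borel V) = F"
proof
  fix x
  have "V -` {..x} \<inter> space M = {\<omega>\<in>space M. V \<omega> \<le> x}" by auto
  then show "cdf (distr M borel V) x = F x"
    using assms by (simp add: cdf_def measure_distr)
qed

lemma (in prob_space) cdf_properties:
  fixes V :: "'a \<Rightarrow> real"
  assumes V: "V \<in> borel_measurable M" and cdf: "\<And>x. prob {\<omega>\<in>space M. V \<omega> \<le> x} = F x"
  shows "mono F" "\<And>x. 0 \<le> F x" "\<And>x. F x \<le> 1" "(F \<longlongrightarrow> 1) at_top" "(F \<longlongrightarrow> 0) at_bot"
proof -
  interpret D: real_distribution "distr M borel V" using V by simp
  note F_eq = cdf_distr_eq[OF V cdf, symmetric]
  show "mono F" unfolding F_eq mono_def by (blast intro: D.cdf_nondecreasing)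
  show "\<And>x. 0 \<le> F x" "\<And>x. F x \<le> 1" unfolding F_eq by (rule D.cdf_nonneg D.cdf_bounded_prob)+
  show "(F \<longlongrightarrow> 1) at_top" "(F \<longlongrightarrow> 0) at_bot" unfolding F_eq by (rule D.cdf_lim_at_top_prob D.cdf_lim_at_bot)+
qed

lemma (in prob_space) prob_less_continuous_cdf:
  fixes V :: "'a \<Rightarrow> real"
  assumes V: "V \<in> borel_measurable M" and cdf: "\<And>x. prob {\<omega>\<in>space M. V \<omega> \<le> x} = F x"
    and "continuous_on UNIV F"
  shows "prob {\<omega>\<in>space M. V \<omega> < z} = F z"
proof -
  interpret D: real_distribution "distr M borel V" using V by simp
  have "(F \<longlongrightarrow> measure (distr M borel V) {..<z}) (at_left z)"
    using D.cdf_at_left[of z] cdf_distr_eq[OF V cdf] by simp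
  moreover have "(F \<longlongrightarrow> F z) (at_left z)"
    using \<open>continuous_on UNIV F\<close>
    by (simp add: continuous_on_eq_continuous_at isCont_def filterlim_at_split)
  ultimately have "measure (distr M borel V) {..<z} = F z"
    by (rule tendsto_unique[rotated]) simp
  moreover have "V -` {..<z} \<inter> space M = {\<omega>\<in>space M. V \<omega> < z}" by auto
  ultimately show ?thesis using V by (simp add: measure_distr)
qed

lemma (in prob_space) distributed_continuous_cdf_uniform:
  fixes V :: "'a \<Rightarrow> real"
  assumes V: "V \<in> borel_measurable M" and cdf: "\<And>x. prob {\<omega>\<in>space M. V \<omega> \<le> x} = F x"
    and cont: "continuous_on UNIV F"
  shows "distributed M lborel (\<lambda>\<omega>. F (V \<omega>)) (\<lambda>x. indicator {0..1} x / measure lborel {0..1::real})"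
proof -
  note F = cdf_properties[OF V cdf]
  have "prob {\<omega>\<in>space M. F (V \<omega>) \<le> t} = t" if "0 \<le> t" "t \<le> 1" for t
  proof (cases "t < 1 \<and> (\<exists>x. F x \<le> t)")
    case True
    then obtain x\<^sub>0 where "t < 1" "F x\<^sub>0 \<le> t" by blast
    then obtain s where "F s = t" and sublevel: "{x. F x \<le> t} = {..s}"
      by (rule continuous_mono_sublevel_eq_atMost[OF cont F(1,4)])
    from sublevel have "F x \<le> t \<longleftrightarrow> x \<le> s" for x by (auto simp: set_eq_iff)
    then have "{\<omega>\<in>space M. F (V \<omega>) \<le> t} = {\<omega>\<in>space M. V \<omega> \<le> s}" by simp
    then show ?thesis using cdf \<open>F s = t\<close> by simp
  next
    case no_sublevel: False
    show ?thesis
    proof (cases "t = 1")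
      case True
      then have "{\<omega>\<in>space M. F (V \<omega>) \<le> t} = space M" using F(3) by auto
      then show ?thesis using True by (simp add: prob_space)
    next
      case False
      then have above: "t < F x" for x using no_sublevel \<open>t \<le> 1\<close> by (simp add: not_le)
      have "t \<le> 0"
      proof (rule ccontr)
        assume "\<not> t \<le> 0"
        then have "eventually (\<lambda>x. F x < t) at_bot"
          using order_tendstoD(2)[OF F(5)] by simp
        then obtain N where "\<And>x. x \<le> N \<Longrightarrow> F x < t"
          by (auto simp: eventually_at_bot_linorder)
        then have "F N < t" by simp
        then show False using above[of N] by simp
      qed
      moreover have "{\<omega>\<in>space M. F (V \<omega>) \<le> t} = {}" using above by (simp add: not_le[symmetric])
      ultimately show ?thesis using \<open>0 \<le> t\<close> by (metis antisym measure_empty)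
    qed
  qed
  moreover have "(\<lambda>\<omega>. F (V \<omega>)) \<in> borel_measurable M"
    using V cont by (intro measurable_compose[OF V] borel_measurable_continuous_onI)
  ultimately show ?thesis by (subst uniform_distributed_iff) auto
qed

text \<open>The two inclusions say that F maps S onto [p, r] up to the endpoints, which carry no
  mass because F \<circ> V is uniformly distributed.\<close>

lemma (in prob_space) integral_indicator_cdf_power:
  fixes V :: "'a \<Rightarrow> real" and S :: "real set"
  assumes V: "V \<in> borel_measurable M" and cdf: "\<And>x. prob {\<omega>\<in>space M. V \<omega> \<le> x} = F x"
    and cont: "continuous_on UNIV F" and S: "S \<in> sets borel"
    and lower: "{x. p < F x \<and> F x < r} \<subseteq> S" and upper: "S \<subseteq> {x. p \<le> F x \<and> F x \<le> r}"
    and "0 \<le> p" "p \<le> r" "r \<le> 1"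
  shows "(\<integral>\<omega>. indicator S (V \<omega>) * F (V \<omega>) ^ m \<partial>M) = (r ^ Suc m - p ^ Suc m) / Suc m"
proof -
  note F = cdf_properties[OF V cdf]
  note uniform = distributed_continuous_cdf_uniform[OF V cdf cont]
  have [measurable]: "F \<in> borel_measurable borel" "S \<in> sets borel" "V \<in> borel_measurable M"
    using cont S V by (auto intro: borel_measurable_continuous_onI)
  have integral_bracket: "(\<integral>\<omega>. indicator T (F (V \<omega>)) * F (V \<omega>) ^ m \<partial>M) = (r ^ Suc m - p ^ Suc m) / Suc m"
    if T: "T = {p<..<r} \<or> T = {p..r}" for T
  proof -
    have [measurable]: "T \<in> sets borel" using T by auto
    have "(\<integral>\<omega>. indicator T (F (V \<omega>)) * F (V \<omega>) ^ m \<partial>M)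
        = (\<integral>t. indicator {0..1} t / measure lborel {0..1::real} * (indicator T t * t ^ m) \<partial>lborel)"
      by (rule distributed_integral[OF uniform, symmetric]) auto
    also have "\<dots> = (\<integral>t. t ^ m * indicator {p..r} t \<partial>lborel)"
    proof (rule integral_cong_AE)
      show "AE t in lborel. indicator {0..1} t / measure lborel {0..1::real} * (indicator T t * t ^ m)
          = t ^ m * indicator {p..r} t"
        using AE_lborel_singleton[of p] AE_lborel_singleton[of r]
        by eventually_elim (use T \<open>0 \<le> p\<close> \<open>r \<le> 1\<close> in \<open>auto simp: indicator_def\<close>)
    qed auto
    also have "\<dots> = (r ^ Suc m - p ^ Suc m) / Suc m" using \<open>p \<le> r\<close> by (rule integral_power)
    finally show ?thesis .
  qed
  have integrable_bounded: "integrable M (\<lambda>\<omega>. indicator T (g \<omega>) * F (V \<omega>) ^ m)"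
    if "g \<in> borel_measurable M" "T \<in> sets borel" for g :: "'a \<Rightarrow> real" and T
    using that F by (intro integrable_const_bound[where B=1])
      (auto simp: indicator_def intro!: power_le_one)
  have FV: "(\<lambda>\<omega>. F (V \<omega>)) \<in> borel_measurable M" by measurable
  have "(\<integral>\<omega>. indicator {p<..<r} (F (V \<omega>)) * F (V \<omega>) ^ m \<partial>M)
      \<le> (\<integral>\<omega>. indicator S (V \<omega>) * F (V \<omega>) ^ m \<partial>M)"
    by (rule integral_mono[OF integrable_bounded[OF FV] integrable_bounded[OF V S]])
      (use lower F(2) in \<open>auto simp: indicator_def\<close>)
  moreover have "(\<integral>\<omega>. indicator S (V \<omega>) * F (V \<omega>) ^ m \<partial>M)
      \<le> (\<integral>\<omega>. indicator {p..r} (F (V \<omega>)) * F (V \<omega>) ^ m \<partial>M)"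
    by (rule integral_mono[OF integrable_bounded[OF V S] integrable_bounded[OF FV]])
      (use upper F(2) in \<open>auto simp: indicator_def\<close>)
  ultimately show ?thesis using integral_bracket[of "{p<..<r}"] integral_bracket[of "{p..r}"] by simp
qed

section \<open>Records of an iid sequence\<close>

lemma (in prob_space) prob_indep_var_eq_integral:
  assumes ind: "indep_var N1 Z N2 W" and S: "S \<in> sets (N1 \<Otimes>\<^sub>M N2)"
    and g: "\<And>z. z \<in> space N1 \<Longrightarrow> prob {\<omega>\<in>space M. (z, W \<omega>) \<in> S} = g z"
    and gm: "g \<in> borel_measurable N1"
  shows "prob {\<omega>\<in>space M. (Z \<omega>, W \<omega>) \<in> S} = (\<integral>\<omega>. g (Z \<omega>) \<partial>M)"
proof -
  have Zm: "Z \<in> measurable M N1" and Wm: "W \<in> measurable M N2"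
    using indep_var_rv1[OF ind] indep_var_rv2[OF ind] by auto
  have eqD: "distr M N1 Z \<Otimes>\<^sub>M distr M N2 W = distr M (N1 \<Otimes>\<^sub>M N2) (\<lambda>x. (Z x, W x))"
    using ind by (simp add: indep_var_distribution_eq)
  interpret PW: prob_space "distr M N2 W" using Wm by (rule prob_space_distr)
  have ZW: "(\<lambda>x. (Z x, W x)) \<in> measurable M (N1 \<Otimes>\<^sub>M N2)" using Zm Wm by (rule measurable_Pair)
  have gb: "0 \<le> g z \<and> g z \<le> 1" if "z \<in> space N1" for z
    using g[OF that, symmetric] by auto
  have "emeasure M {\<omega>\<in>space M. (Z \<omega>, W \<omega>) \<in> S} = emeasure (distr M (N1 \<Otimes>\<^sub>M N2) (\<lambda>x. (Z x, W x))) S"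
    using S ZW by (subst emeasure_distr) (auto intro!: arg_cong[where f="emeasure M"])
  also have "\<dots> = emeasure (distr M N1 Z \<Otimes>\<^sub>M distr M N2 W) S" using eqD by simp
  also have "\<dots> = (\<integral>\<^sup>+z. emeasure (distr M N2 W) (Pair z -` S) \<partial>distr M N1 Z)"
    using S by (intro PW.emeasure_pair_measure_alt) simp
  also have "\<dots> = (\<integral>\<^sup>+z. ennreal (g z) \<partial>distr M N1 Z)"
  proof (rule nn_integral_cong)
    fix z assume z: "z \<in> space (distr M N1 Z)"
    have "emeasure (distr M N2 W) (Pair z -` S) = emeasure M (W -` (Pair z -` S) \<inter> space M)"
      using S z Wm by (intro emeasure_distr) (auto intro!: measurable_Pair2')
    also have "W -` (Pair z -` S) \<inter> space M = {\<omega>\<in>space M. (z, W \<omega>) \<in> S}" by auto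
    also have "emeasure M \<dots> = ennreal (g z)"
      using z g[of z] by (simp add: emeasure_eq_measure)
    finally show "emeasure (distr M N2 W) (Pair z -` S) = ennreal (g z)" .
  qed
  also have "\<dots> = (\<integral>\<^sup>+\<omega>. ennreal (g (Z \<omega>)) \<partial>M)"
    using gm Zm by (intro nn_integral_distr) auto
  also have "\<dots> = ennreal (\<integral>\<omega>. g (Z \<omega>) \<partial>M)"
  proof (rule nn_integral_eq_integral)
    show "integrable M (\<lambda>\<omega>. g (Z \<omega>))"
      by (rule integrable_const_bound[where B=1])
         (use gb Zm measurable_space[OF Zm] gm in \<open>auto\<close>)
    show "AE \<omega> in M. 0 \<le> g (Z \<omega>)"
      using gb measurable_space[OF Zm] by auto
  qed
  finally show ?thesis
    by (simp add: emeasure_eq_measure integral_nonneg_AE gb measurable_space[OF Zm])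
qed

lemma is_record_pair_iff:
  assumes "1 \<le> j" "j < k"
  shows "is_record X j \<omega> \<and> is_record X k \<omega> \<longleftrightarrow>
    is_record X j \<omega> \<and> X j \<omega> < X k \<omega> \<and> (\<forall>i\<in>{j<..<k}. X i \<omega> < X k \<omega>)"
proof
  assume H: "is_record X j \<omega> \<and> X j \<omega> < X k \<omega> \<and> (\<forall>i\<in>{j<..<k}. X i \<omega> < X k \<omega>)"
  have "X i \<omega> < X k \<omega>" if "i \<in> {1..<k}" for i
  proof (cases i j rule: linorder_cases)
    case less
    then have "X i \<omega> < X j \<omega>" using H that by (auto simp: is_record_def)
    then show ?thesis using H by linarith
  qed (use H that in auto)
  then show "is_record X j \<omega> \<and> is_record X k \<omega>" using H by (auto simp: is_record_def)
qed (use assms in \<open>auto simp: is_record_def\<close>)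

locale iid_continuous_cdf = prob_space +
  fixes X :: "nat \<Rightarrow> 'a \<Rightarrow> real" and F :: "real \<Rightarrow> real"
  assumes X_measurable[measurable]: "\<And>i. X i \<in> borel_measurable M"
    and X_indep: "indep_vars (\<lambda>_. borel) X UNIV"
    and X_cdf: "\<And>i x. prob {\<omega>\<in>space M. X i \<omega> \<le> x} = F x"
    and F_continuous: "continuous_on UNIV F"
begin

lemma F_borel_measurable[measurable]: "F \<in> borel_measurable borel"
  using F_continuous by (rule borel_measurable_continuous_onI)

lemma F_mono: "mono F" and F_nonneg: "0 \<le> F x" and F_le_1: "F x \<le> 1"
  using cdf_properties[OF X_measurable X_cdf] by blast+

lemma F_less_imp_less: "F x < F y \<Longrightarrow> x < y"
  using monoD[OF F_mono, of y x] by (meson not_le)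

lemma integral_indicator_F_power:
  assumes "S \<in> sets borel" "{x. p < F x \<and> F x < r} \<subseteq> S" "S \<subseteq> {x. p \<le> F x \<and> F x \<le> r}"
    and "0 \<le> p" "p \<le> r" "r \<le> 1"
  shows "(\<integral>\<omega>. indicator S (X i \<omega>) * F (X i \<omega>) ^ m \<partial>M) = (r ^ Suc m - p ^ Suc m) / Suc m"
  using integral_indicator_cdf_power[OF X_measurable X_cdf F_continuous assms] .

lemma prob_all_less:
  assumes "finite B"
  shows "prob {\<omega>\<in>space M. \<forall>i\<in>B. X i \<omega> < z} = F z ^ card B"
proof (cases "B = {}")
  case False
  have "prob {\<omega>\<in>space M. \<forall>i\<in>B. X i \<omega> < z} = prob (\<Inter>i\<in>B. X i -` {..<z} \<inter> space M)"
    using False by (intro arg_cong[where f=prob]) auto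
  also have "\<dots> = (\<Prod>i\<in>B. prob (X i -` {..<z} \<inter> space M))"
    using False assms by (intro indep_varsD[OF X_indep]) auto
  also have "\<dots> = (\<Prod>i\<in>B. F z)"
  proof (rule prod.cong[OF refl])
    fix i
    have "X i -` {..<z} \<inter> space M = {\<omega>\<in>space M. X i \<omega> < z}" by auto
    then show "prob (X i -` {..<z} \<inter> space M) = F z"
      using prob_less_continuous_cdf[OF X_measurable X_cdf F_continuous] by simp
  qed
  finally show ?thesis by simp
qed (simp add: prob_space)

lemma prob_record_in:
  assumes T[measurable]: "T \<in> sets borel"
  shows "prob {\<omega>\<in>space M. is_record X j \<omega> \<and> X j \<omega> \<in> T}
     = (\<integral>\<omega>. indicator T (X j \<omega>) * F (X j \<omega>) ^ (j - 1) \<partial>M)"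
proof -
  let ?N1 = "PiM {j} (\<lambda>_. borel::real measure)"
  let ?N2 = "PiM {1..<j} (\<lambda>_. borel::real measure)"
  define S where "S = {p\<in>space (?N1 \<Otimes>\<^sub>M ?N2). (\<forall>i\<in>{1..<j}. snd p i < fst p j) \<and> fst p j \<in> T}"
  have S: "S \<in> sets (?N1 \<Otimes>\<^sub>M ?N2)" unfolding S_def by measurable
  have indep: "indep_var ?N1 (\<lambda>\<omega>. \<lambda>i\<in>{j}. X i \<omega>) ?N2 (\<lambda>\<omega>. \<lambda>i\<in>{1..<j}. X i \<omega>)"
    by (rule indep_var_restrict[OF X_indep]) auto
  have "prob {\<omega>\<in>space M. ((\<lambda>i\<in>{j}. X i \<omega>), (\<lambda>i\<in>{1..<j}. X i \<omega>)) \<in> S}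
     = (\<integral>\<omega>. (\<lambda>f. indicator T (f j) * F (f j) ^ (j - 1)) (\<lambda>i\<in>{j}. X i \<omega>) \<partial>M)"
  proof (rule prob_indep_var_eq_integral[OF indep S])
    fix z :: "nat \<Rightarrow> real" assume z: "z \<in> space ?N1"
    show "prob {\<omega>\<in>space M. (z, \<lambda>i\<in>{1..<j}. X i \<omega>) \<in> S} = indicator T (z j) * F (z j) ^ (j - 1)"
    proof (cases "z j \<in> T")
      case True
      then have "{\<omega>\<in>space M. (z, \<lambda>i\<in>{1..<j}. X i \<omega>) \<in> S}
          = {\<omega>\<in>space M. \<forall>i\<in>{1..<j}. X i \<omega> < z j}"
        using z by (auto simp: S_def space_pair_measure space_PiM)
      then show ?thesis using True prob_all_less[of "{1..<j}" "z j"] by simp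
    next
      case False
      then have empty: "{\<omega>\<in>space M. (z, \<lambda>i\<in>{1..<j}. X i \<omega>) \<in> S} = {}"
        by (auto simp: S_def)
      show ?thesis unfolding empty using False by simp
    qed
  qed measurable
  moreover have "{\<omega>\<in>space M. ((\<lambda>i\<in>{j}. X i \<omega>), (\<lambda>i\<in>{1..<j}. X i \<omega>)) \<in> S}
     = {\<omega>\<in>space M. is_record X j \<omega> \<and> X j \<omega> \<in> T}"
    by (auto simp: S_def is_record_def space_pair_measure space_PiM)
  ultimately show ?thesis by simp
qed

lemma prob_record_between_and_gap_below:
  assumes "1 \<le> j" "j < k"
  shows "prob {\<omega>\<in>space M. is_record X j \<omega> \<and> c < X j \<omega> \<and> X j \<omega> < z
      \<and> (\<forall>i\<in>{j<..<k}. X i \<omega> < z)}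
     = F z ^ (k - j - 1) * (if c < z then (F z ^ j - F c ^ j) / j else 0)"
proof -
  let ?A = "{j<..<k}" and ?B = "{1..j}"
  let ?RA = "\<lambda>\<omega>. \<lambda>i\<in>?A. X i \<omega>" and ?RB = "\<lambda>\<omega>. \<lambda>i\<in>?B. X i \<omega>"
  define Xa where "Xa = {f\<in>space (PiM ?A (\<lambda>_. borel::real measure)). \<forall>i\<in>?A. f i < z}"
  define Xb where "Xb = {f\<in>space (PiM ?B (\<lambda>_. borel::real measure)). (\<forall>i\<in>{1..<j}. f i < f j) \<and> f j \<in> {c<..<z}}"
  have "j \<in> ?B" using assms by simp
  then have [measurable]: "Xa \<in> sets (PiM ?A (\<lambda>_. borel))" "Xb \<in> sets (PiM ?B (\<lambda>_. borel))"
    unfolding Xa_def Xb_def by measurable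
  have indep: "indep_var (PiM ?A (\<lambda>_. borel)) ?RA (PiM ?B (\<lambda>_. borel)) ?RB"
    by (rule indep_var_restrict[OF X_indep]) auto
  have "prob ((\<lambda>x. (?RA x, ?RB x)) -` (Xa \<times> Xb) \<inter> space M)
      = prob (?RA -` Xa \<inter> space M) * prob (?RB -` Xb \<inter> space M)"
    by (rule indep_varD[OF indep]) measurable
  moreover have "(\<lambda>x. (?RA x, ?RB x)) -` (Xa \<times> Xb) \<inter> space M =
     {\<omega>\<in>space M. is_record X j \<omega> \<and> c < X j \<omega> \<and> X j \<omega> < z \<and> (\<forall>i\<in>{j<..<k}. X i \<omega> < z)}"
    using \<open>j \<in> ?B\<close> by (auto simp: Xa_def Xb_def is_record_def space_PiM)
  moreover have "prob (?RA -` Xa \<inter> space M) = F z ^ (k - j - 1)"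
    using prob_all_less[of ?A z] by (simp add: Xa_def space_PiM vimage_def Int_def conj_commute)
  moreover have "prob (?RB -` Xb \<inter> space M) = (if c < z then (F z ^ j - F c ^ j) / j else 0)"
  proof (cases "c < z")
    case True
    have event: "?RB -` Xb \<inter> space M = {\<omega>\<in>space M. is_record X j \<omega> \<and> X j \<omega> \<in> {c<..<z}}"
      using \<open>j \<in> ?B\<close> by (auto simp: Xb_def is_record_def space_PiM)
    have "prob (?RB -` Xb \<inter> space M) = (\<integral>\<omega>. indicator {c<..<z} (X j \<omega>) * F (X j \<omega>) ^ (j - 1) \<partial>M)"
      unfolding event by (rule prob_record_in) simp
    also have "\<dots> = (F z ^ Suc (j - 1) - F c ^ Suc (j - 1)) / Suc (j - 1)"
      using F_mono True
      by (intro integral_indicator_F_power) (auto simp: F_nonneg F_le_1 mono_def not_le[symmetric])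
    finally show ?thesis using True \<open>1 \<le> j\<close> by simp
  next
    case False
    then have "?RB -` Xb \<inter> space M = {}" by (auto simp: Xb_def)
    then show ?thesis using False by simp
  qed
  ultimately show ?thesis by simp
qed

lemma integral_two_record_density:
  assumes "1 \<le> j" "j < k" and [measurable]: "S \<in> sets borel"
    and "{x. F c < F x \<and> F x < r} \<subseteq> S" "S \<subseteq> {x. F c \<le> F x \<and> F x \<le> r}"
    and "F c \<le> r" "r \<le> 1"
  shows "(\<integral>\<omega>. indicator S (X k \<omega>) * (F (X k \<omega>) ^ (k - j - 1) * ((F (X k \<omega>) ^ j - F c ^ j) / j)) \<partial>M)
    = two_record_mass (F c) r j k"
proof -
  have power_integral: "(\<integral>\<omega>. indicator S (X k \<omega>) * F (X k \<omega>) ^ m \<partial>M)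
      = (r ^ Suc m - F c ^ Suc m) / Suc m" for m
    using assms by (intro integral_indicator_F_power) (auto simp: F_nonneg)
  have "Suc (k - 1) = k" "Suc (k - j - 1) = k - j" using assms by auto
  note integrals = power_integral[of "k - 1", unfolded this(1)] power_integral[of "k - j - 1", unfolded this(2)]
  have "indicator S (X k \<omega>) * (F (X k \<omega>) ^ (k - j - 1) * ((F (X k \<omega>) ^ j - F c ^ j) / j))
      = (indicator S (X k \<omega>) * F (X k \<omega>) ^ (k - 1)
      - F c ^ j * (indicator S (X k \<omega>) * F (X k \<omega>) ^ (k - j - 1))) / j" for \<omega>
  proof -
    have "F (X k \<omega>) ^ (k - j - 1) * F (X k \<omega>) ^ j = F (X k \<omega>) ^ (k - 1)"
      using assms by (simp add: power_add[symmetric])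
    then show ?thesis by (simp add: field_simps indicator_def)
  qed
  moreover have "integrable M (\<lambda>\<omega>. indicator S (X k \<omega>) * F (X k \<omega>) ^ m)" for m
    by (intro integrable_const_bound[where B=1])
      (auto simp: indicator_def F_nonneg F_le_1 intro!: power_le_one)
  ultimately show ?thesis
    using integrals assms by (simp add: two_record_mass_def)
qed

lemma prob_two_records:
  assumes "1 \<le> j" "j < k" and I[measurable]: "I \<in> sets borel"
    and lower: "{x. F c < F x \<and> F x < r} \<subseteq> {x. c < x \<and> x \<in> I}"
    and upper: "{x. c < x \<and> x \<in> I} \<subseteq> {x. F c \<le> F x \<and> F x \<le> r}"
    and "F c \<le> r" "r \<le> 1"
  shows "prob {\<omega>\<in>space M. c < X j \<omega> \<and> X k \<omega> \<in> I \<and> is_record X j \<omega> \<and> is_record X k \<omega>}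
    = two_record_mass (F c) r j k"
proof -
  let ?N1 = "PiM {k} (\<lambda>_. borel::real measure)"
  let ?N2 = "PiM {1..<k} (\<lambda>_. borel::real measure)"
  let ?I' = "{x. c < x \<and> x \<in> I}"
  have [measurable]: "?I' \<in> sets borel" by measurable
  define S where "S = {p\<in>space (?N1 \<Otimes>\<^sub>M ?N2). fst p k \<in> I \<and> (\<forall>i\<in>{1..<j}. snd p i < snd p j) \<and> c < snd p j
      \<and> snd p j < fst p k \<and> (\<forall>i\<in>{j<..<k}. snd p i < fst p k)}"
  have j_mem: "j \<in> {1..<k}" using assms by simp
  have S: "S \<in> sets (?N1 \<Otimes>\<^sub>M ?N2)" unfolding S_def using j_mem
    apply measurable
    using assms apply auto[1]
    using assms apply measurable
    using assms apply auto
    done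
  have indep: "indep_var ?N1 (\<lambda>\<omega>. \<lambda>i\<in>{k}. X i \<omega>) ?N2 (\<lambda>\<omega>. \<lambda>i\<in>{1..<k}. X i \<omega>)"
    by (rule indep_var_restrict[OF X_indep]) auto
  define g where "g x = indicator ?I' x * (F x ^ (k - j - 1) * ((F x ^ j - F c ^ j) / j))" for x
  have [measurable]: "g \<in> borel_measurable borel" unfolding g_def by measurable
  have "prob {\<omega>\<in>space M. ((\<lambda>i\<in>{k}. X i \<omega>), (\<lambda>i\<in>{1..<k}. X i \<omega>)) \<in> S}
     = (\<integral>\<omega>. (\<lambda>f. g (f k)) (\<lambda>i\<in>{k}. X i \<omega>) \<partial>M)"
  proof (rule prob_indep_var_eq_integral[OF indep S])
    fix z :: "nat \<Rightarrow> real" assume z: "z \<in> space ?N1"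
    show "prob {\<omega>\<in>space M. (z, \<lambda>i\<in>{1..<k}. X i \<omega>) \<in> S} = g (z k)"
    proof (cases "z k \<in> I")
      case True
      then have "{\<omega>\<in>space M. (z, \<lambda>i\<in>{1..<k}. X i \<omega>) \<in> S}
          = {\<omega>\<in>space M. is_record X j \<omega> \<and> c < X j \<omega> \<and> X j \<omega> < z k \<and> (\<forall>i\<in>{j<..<k}. X i \<omega> < z k)}"
        using z j_mem by (auto simp: S_def is_record_def space_pair_measure space_PiM)
      then show ?thesis
        using True prob_record_between_and_gap_below[OF assms(1,2), of c "z k"]
        by (simp add: g_def indicator_def)
    next
      case False
      then have empty: "{\<omega>\<in>space M. (z, \<lambda>i\<in>{1..<k}. X i \<omega>) \<in> S} = {}"
        by (auto simp: S_def)
      show ?thesis unfolding empty using False by (simp add: g_def)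
    qed
  qed measurable
  moreover have "{\<omega>\<in>space M. ((\<lambda>i\<in>{k}. X i \<omega>), (\<lambda>i\<in>{1..<k}. X i \<omega>)) \<in> S}
     = {\<omega>\<in>space M. c < X j \<omega> \<and> X k \<omega> \<in> I \<and> is_record X j \<omega> \<and> is_record X k \<omega>}"
    unfolding is_record_pair_iff[OF assms(1,2)] using j_mem
    by (auto simp: S_def is_record_def space_pair_measure space_PiM)
  moreover have "(\<integral>\<omega>. g (X k \<omega>) \<partial>M) = two_record_mass (F c) r j k"
    unfolding g_def using assms by (intro integral_two_record_density) auto
  ultimately show ?thesis by simp
qed

lemma prob_two_records_interval:
  assumes "1 \<le> j" "j < k" "c \<le> d"
  shows "prob {\<omega>\<in>space M. c < X j \<omega> \<and> X k \<omega> \<le> d \<and> is_record X j \<omega> \<and> is_record X k \<omega>}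
    = two_record_mass (F c) (F d) j k"
proof -
  have "{x. F c < F x \<and> F x < F d} \<subseteq> {x. c < x \<and> x \<in> {..d}}"
    by (auto dest: F_less_imp_less)
  moreover have "{x. c < x \<and> x \<in> {..d}} \<subseteq> {x. F c \<le> F x \<and> F x \<le> F d}"
    by (auto intro: monoD[OF F_mono])
  ultimately have "prob {\<omega>\<in>space M. c < X j \<omega> \<and> X k \<omega> \<in> {..d} \<and> is_record X j \<omega> \<and> is_record X k \<omega>}
      = two_record_mass (F c) (F d) j k"
    using assms monoD[OF F_mono \<open>c \<le> d\<close>] by (intro prob_two_records) (auto simp: F_le_1)
  then show ?thesis by simp
qed

lemma prob_two_records_above:
  assumes "1 \<le> j" "j < k"
  shows "prob {\<omega>\<in>space M. c < X j \<omega> \<and> is_record X j \<omega> \<and> is_record X k \<omega>}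
    = two_record_mass (F c) 1 j k"
proof -
  have "{x. F c < F x \<and> F x < 1} \<subseteq> {x. c < x \<and> x \<in> UNIV}"
    by (auto dest: F_less_imp_less)
  moreover have "{x. c < x \<and> x \<in> UNIV} \<subseteq> {x. F c \<le> F x \<and> F x \<le> 1}"
    by (auto intro: monoD[OF F_mono] F_le_1)
  ultimately have "prob {\<omega>\<in>space M. c < X j \<omega> \<and> X k \<omega> \<in> UNIV \<and> is_record X j \<omega> \<and> is_record X k \<omega>}
      = two_record_mass (F c) 1 j k"
    using assms by (intro prob_two_records) (auto simp: F_le_1)
  then show ?thesis by simp
qed

lemma prob_two_records_normalized_ratio:
  assumes "1 \<le> j" "j < k" "0 < a" "u \<le> y"
  shows "prob {\<omega>\<in>space M. (X k \<omega> - b) / a \<le> y \<and> (X j \<omega> - b) / a > u \<and> is_record X j \<omega> \<and> is_record X k \<omega>}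
      / prob {\<omega>\<in>space M. (X j \<omega> - b) / a > u \<and> is_record X j \<omega> \<and> is_record X k \<omega>}
    = two_record_mass (F (a * u + b)) (F (a * y + b)) j k / two_record_mass (F (a * u + b)) 1 j k"
proof -
  have "a * u + b \<le> a * y + b" using assms by simp
  moreover have "{\<omega>\<in>space M. (X k \<omega> - b) / a \<le> y \<and> (X j \<omega> - b) / a > u \<and> is_record X j \<omega> \<and> is_record X k \<omega>}
      = {\<omega>\<in>space M. a * u + b < X j \<omega> \<and> X k \<omega> \<le> a * y + b \<and> is_record X j \<omega> \<and> is_record X k \<omega>}"
    "{\<omega>\<in>space M. (X j \<omega> - b) / a > u \<and> is_record X j \<omega> \<and> is_record X k \<omega>}
      = {\<omega>\<in>space M. a * u + b < X j \<omega> \<and> is_record X j \<omega> \<and> is_record X k \<omega>}"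
    using \<open>0 < a\<close> by (auto simp: pos_divide_le_eq pos_less_divide_eq algebra_simps)
  ultimately show ?thesis
    using prob_two_records_interval[OF assms(1,2)] prob_two_records_above[OF assms(1,2)] by simp
qed
end

theorem mainTheorem11:
  fixes M :: "'a measure" and X :: "nat \<Rightarrow> 'a \<Rightarrow> real" and F G :: "real \<Rightarrow> real"
    and a b :: "nat \<Rightarrow> real" and j k :: "nat \<Rightarrow> nat" and lam1 lam2 u y :: real
  assumes "prob_space M"
    and "\<And>i. X i \<in> borel_measurable M"
    and "prob_space.indep_vars M (\<lambda>_. borel) X UNIV"
    and "\<And>i x. measure M {\<omega> \<in> space M. X i \<omega> \<le> x} = F x"
    and "continuous_on UNIV F"
    and "in_doa F G a b"
    and "(\<lambda>n. real (j n) / real n) \<longlonglongrightarrow> lam1" and "lam1 > 0"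
    and "(\<lambda>n. real (k n) / real n) \<longlonglongrightarrow> lam2" and "lam2 > lam1"
    and "u < y" and "G u < 1"
  shows "(\<lambda>n. measure M {\<omega> \<in> space M. (X (k n) \<omega> - b n) / a n \<le> y \<and>
                 (X (j n) \<omega> - b n) / a n > u \<and> is_record X (j n) \<omega> \<and> is_record X (k n) \<omega>}
             / measure M {\<omega> \<in> space M. (X (j n) \<omega> - b n) / a n > u \<and>
                 is_record X (j n) \<omega> \<and> is_record X (k n) \<omega>})
    \<longlonglongrightarrow>
      (let \<beta>\<^sub>1 = lam1 / (lam2 - lam1); \<beta>\<^sub>2 = lam2 / (lam2 - lam1) in
       (G y powr lam2 - G u powr lam1 *
          (\<beta>\<^sub>2 * G y powr (lam2 - lam1) - \<beta>\<^sub>1 * G u powr (lam2 - lam1)))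
       / (\<beta>\<^sub>2 * (1 - G u powr lam1) - \<beta>\<^sub>1 * (1 - G u powr lam2)))"
proof -
  interpret iid_continuous_cdf M X F
    using assms(1-5) by (simp add: iid_continuous_cdf_def iid_continuous_cdf_axioms_def)
  from assms(6) have a_pos: "\<And>n. 0 < a n" and doa: "\<And>x. (\<lambda>n. F (a n * x + b n) ^ n) \<longlonglongrightarrow> G x"
    unfolding in_doa_def by auto
  have "(\<lambda>n. two_record_mass (F (a n * u + b n)) (F (a n * y + b n)) (j n) (k n)
      / two_record_mass (F (a n * u + b n)) 1 (j n) (k n))
    \<longlonglongrightarrow> two_record_limit lam1 lam2 (G u) (G y) / two_record_limit lam1 lam2 (G u) 1"
    using F_nonneg doa assms(7-10,12) by (intro two_record_mass_ratio_asymptotics)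
  moreover have "eventually (\<lambda>n. two_record_mass (F (a n * u + b n)) (F (a n * y + b n)) (j n) (k n)
      / two_record_mass (F (a n * u + b n)) 1 (j n) (k n)
    = measure M {\<omega> \<in> space M. (X (k n) \<omega> - b n) / a n \<le> y \<and>
                 (X (j n) \<omega> - b n) / a n > u \<and> is_record X (j n) \<omega> \<and> is_record X (k n) \<omega>}
      / measure M {\<omega> \<in> space M. (X (j n) \<omega> - b n) / a n > u \<and>
                 is_record X (j n) \<omega> \<and> is_record X (k n) \<omega>}) sequentially"
    using eventually_index_order[OF assms(7-10)]
    by eventually_elim (use a_pos assms(11) in \<open>simp add: prob_two_records_normalized_ratio\<close>)
  ultimately show ?thesis
    unfolding two_record_limit_quotient[OF assms(10), symmetric] by (rule Lim_transform_eventually)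
qed

end
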